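(* Let $A_m(x)=R_{2m}(x)$ and $B_m(x)=R_{2m+1}(x)$. For every integer $m\ge 3$, \[ A_m(x)=(1+x+x^2)A_{m-1}(x)-x^2A_{m-2}(x),\qquad B_m(x)=(1+x+x^2)B_{m-1}(x)-x^2B_{m-2}(x). \]
   Context: For $n\ge1$ let $\Xi_n$ be the poset on $\{x_1,\dots,x_n\}$ whose cover relations are exactly: $x_2\prec x_1$, $x_3\prec x_2$, and for $3\le i\le n-1$, $x_i\prec x_{i+1}$ if $i$ is odd and $x_{i+1}\prec x_i$ if $i$ is even (so $x_1>x_2>x_3<x_4>x_5<\cdots$). A filter of a poset is an up-closed subset. $\Omega_n$ is the lattice of filters of $\Xi_n$ under reverse inclusion; $\Omega_0$ is the one-element lattice. $R_n(x)=\sum_{F\in\Omega_n}x^{\,n-|F|}$ is the rank generating function of $\Omega_n$, with $R_0(x)=1$. *)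

theory Defs
  imports "HOL-Computational_Algebra.Polynomial"
begin

text \<open>The poset Xi_n on the elements x_1..x_n, represented by the indices 1..n.
  A pair (i,j) in xi_covers n means x_i is covered by x_j (x_i \<prec> x_j).\<close>
definition xi_covers :: "nat \<Rightarrow> (nat \<times> nat) set" where
  "xi_covers n =
     (if 2 \<le> n then {(2,1)} else {}) \<union>
     (if 3 \<le> n then {(3,2)} else {}) \<union>
     {(i, i+1) | i. 3 \<le> i \<and> i \<le> n - 1 \<and> odd i} \<union>
     {(i+1, i) | i. 3 \<le> i \<and> i \<le> n - 1 \<and> even i}"

definition xi_le :: "nat \<Rightarrow> nat \<Rightarrow> nat \<Rightarrow> bool" where
  "xi_le n i j \<longleftrightarrow> i \<in> {1..n} \<and> j \<in> {1..n} \<and> (i, j) \<in> (xi_covers n)\<^sup>*"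

definition xi_filters :: "nat \<Rightarrow> nat set set" where
  "xi_filters n = {F. F \<subseteq> {1..n} \<and> (\<forall>i\<in>F. \<forall>j. xi_le n i j \<longrightarrow> j \<in> F)}"

text \<open>Rank generating function of Omega_n (filters under reverse inclusion).\<close>
definition R :: "nat \<Rightarrow> int poly" where
  "R n = (\<Sum>F\<in>xi_filters n. monom 1 (n - card F))"

definition A :: "nat \<Rightarrow> int poly" where "A m = R (2*m)"
definition B :: "nat \<Rightarrow> int poly" where "B m = R (2*m+1)"

end

theory Submission imports Defs begin

text \<open>Build \<open>\<Xi>\<^sub>n\<^sub>+\<^sub>1\<close> from \<open>\<Xi>\<^sub>n\<close> by adding the new element \<open>x\<^sub>n\<^sub>+\<^sub>1\<close>, and split the filters
  according to whether they contain the last element. The pair of generating functions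
  of the two classes evolves by one of two \<open>2\<times>2\<close> transfer matrices, according to whether
  \<open>x\<^sub>n\<^sub>+\<^sub>1\<close> lies above or below \<open>x\<^sub>n\<close>. From \<open>n \<ge> 2\<close> on these directions alternate, so two
  steps act by a fixed product \<open>M\<close> of trace \<open>1 + x + x\<^sup>2\<close> and determinant \<open>x\<^sup>2\<close>; the
  Cayley--Hamilton identity \<open>M\<^sup>2 = (1 + x + x\<^sup>2) M - x\<^sup>2\<close> gives the recurrence
  \<open>R\<^sub>n\<^sub>+\<^sub>4 = (1 + x + x\<^sup>2) R\<^sub>n\<^sub>+\<^sub>2 - x\<^sup>2 R\<^sub>n\<close>, whose even and odd instances are the theorem.\<close>

definition xi_rises_at :: "nat \<Rightarrow> bool" where
  "xi_rises_at n \<longleftrightarrow> 3 \<le> n \<and> odd n"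

definition xi_new_cover :: "nat \<Rightarrow> nat \<times> nat" where
  "xi_new_cover n = (if xi_rises_at n then (n, Suc n) else (Suc n, n))"

lemma xi_covers_subset: "xi_covers n \<subseteq> {1..n} \<times> {1..n}"
  unfolding xi_covers_def by auto

lemma xi_covers_iff:
  "(i, j) \<in> xi_covers n \<longleftrightarrow>
     (2 \<le> n \<and> i = 2 \<and> j = 1) \<or> (3 \<le> n \<and> i = 3 \<and> j = 2) \<or>
     (3 \<le> i \<and> i + 1 \<le> n \<and> odd i \<and> j = i + 1) \<or> (3 \<le> j \<and> j + 1 \<le> n \<and> even j \<and> i = j + 1)"
  unfolding xi_covers_def by auto

lemma xi_covers_Suc:
  assumes "1 \<le> n"
  shows "xi_covers (Suc n) = insert (xi_new_cover n) (xi_covers n)"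
proof (intro set_eqI)
  fix p :: "nat \<times> nat"
  obtain i j where p: "p = (i, j)" by fastforce
  show "p \<in> xi_covers (Suc n) \<longleftrightarrow> p \<in> insert (xi_new_cover n) (xi_covers n)"
  proof (cases "xi_rises_at n")
    case True
    then have cover: "xi_new_cover n = (n, Suc n)"
      by (simp add: xi_new_cover_def)
    show ?thesis
      unfolding p insert_iff xi_covers_iff cover prod.inject
      using assms True[unfolded xi_rises_at_def] by (auto simp: le_Suc_eq)
  next
    case False
    then have cover: "xi_new_cover n = (Suc n, n)"
      by (simp add: xi_new_cover_def)
    show ?thesis
      unfolding p insert_iff xi_covers_iff cover prod.inject
      using assms False[unfolded xi_rises_at_def] by (cases "n = 1"; cases "n = 2"; auto simp: le_Suc_eq)
  qed
qed

lemma xi_filters_cover_closed: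
  "xi_filters n = {F. F \<subseteq> {1..n} \<and> (\<forall>i j. (i, j) \<in> xi_covers n \<longrightarrow> i \<in> F \<longrightarrow> j \<in> F)}"
proof (intro set_eqI iffI)
  fix F assume "F \<in> xi_filters n"
  then show "F \<in> {F. F \<subseteq> {1..n} \<and> (\<forall>i j. (i, j) \<in> xi_covers n \<longrightarrow> i \<in> F \<longrightarrow> j \<in> F)}"
    unfolding xi_filters_def xi_le_def using xi_covers_subset by blast
next
  fix F assume F: "F \<in> {F. F \<subseteq> {1..n} \<and> (\<forall>i j. (i, j) \<in> xi_covers n \<longrightarrow> i \<in> F \<longrightarrow> j \<in> F)}"
  have "j \<in> F" if "(i, j) \<in> (xi_covers n)\<^sup>*" "i \<in> F" for i j
    using that by (induction rule: rtrancl_induct) (use F in auto)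
  then show "F \<in> xi_filters n"
    using F unfolding xi_filters_def xi_le_def by blast
qed

lemma xi_filter_subset: "F \<in> xi_filters n \<Longrightarrow> F \<subseteq> {1..n}"
  unfolding xi_filters_def by blast

lemma finite_xi_filters: "finite (xi_filters n)"
  by (rule finite_subset[of _ "Pow {1..n}"]) (use xi_filter_subset in auto)

lemma xi_filters_Suc_iff:
  assumes "1 \<le> n" and "xi_new_cover n = (a, b)"
  shows "F \<in> xi_filters (Suc n) \<longleftrightarrow>
           F \<subseteq> {1..Suc n} \<and> F - {Suc n} \<in> xi_filters n \<and> (a \<in> F \<longrightarrow> b \<in> F)"
proof -
  let ?closed = "\<forall>i j. (i, j) \<in> xi_covers n \<longrightarrow> i \<in> F \<longrightarrow> j \<in> F"
  have "F \<in> xi_filters (Suc n) \<longleftrightarrow> F \<subseteq> {1..Suc n} \<and> (a \<in> F \<longrightarrow> b \<in> F) \<and> ?closed"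
    unfolding xi_filters_cover_closed xi_covers_Suc[OF assms(1)] assms(2) by blast
  moreover have "F - {Suc n} \<in> xi_filters n \<longleftrightarrow> F - {Suc n} \<subseteq> {1..n} \<and> ?closed"
  proof -
    have "i \<in> F - {Suc n} \<longleftrightarrow> i \<in> F" "j \<in> F - {Suc n} \<longleftrightarrow> j \<in> F"
      if "(i, j) \<in> xi_covers n" for i j
      using that xi_covers_subset[of n] by fastforce+
    then show ?thesis
      unfolding xi_filters_cover_closed mem_Collect_eq by meson
  qed
  moreover have "F \<subseteq> {1..Suc n} \<Longrightarrow> F - {Suc n} \<subseteq> {1..n}"
    by auto
  ultimately show ?thesis
    by blast
qed

lemma xi_filters_Suc_with_last:
  assumes "1 \<le> n" and "xi_new_cover n = (a, b)"
  shows "{F \<in> xi_filters (Suc n). Suc n \<in> F} =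
           insert (Suc n) ` {G \<in> xi_filters n. a \<in> insert (Suc n) G \<longrightarrow> b \<in> insert (Suc n) G}"
proof (intro set_eqI iffI)
  fix F assume "F \<in> {F \<in> xi_filters (Suc n). Suc n \<in> F}"
  then have "F = insert (Suc n) (F - {Suc n})" "F - {Suc n} \<in> xi_filters n" "a \<in> F \<longrightarrow> b \<in> F"
    using xi_filters_Suc_iff[OF assms] by auto
  then show "F \<in> insert (Suc n) ` {G \<in> xi_filters n. a \<in> insert (Suc n) G \<longrightarrow> b \<in> insert (Suc n) G}"
    by (metis (no_types, lifting) image_eqI mem_Collect_eq)
next
  fix F assume "F \<in> insert (Suc n) ` {G \<in> xi_filters n. a \<in> insert (Suc n) G \<longrightarrow> b \<in> insert (Suc n) G}"
  then obtain G where G: "G \<in> xi_filters n" "F = insert (Suc n) G" "a \<in> F \<longrightarrow> b \<in> F"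
    by blast
  moreover have "F - {Suc n} = G" "F \<subseteq> {1..Suc n}"
    using G xi_filter_subset[of G n] by auto
  ultimately show "F \<in> {F \<in> xi_filters (Suc n). Suc n \<in> F}"
    using xi_filters_Suc_iff[OF assms, of F] by simp
qed

lemma xi_filters_Suc_without_last:
  assumes "1 \<le> n" and "xi_new_cover n = (a, b)"
  shows "{F \<in> xi_filters (Suc n). Suc n \<notin> F} = {G \<in> xi_filters n. a \<in> G \<longrightarrow> b \<in> G}"
proof (intro set_eqI iffI)
  fix F assume F: "F \<in> {F \<in> xi_filters (Suc n). Suc n \<notin> F}"
  then have "F - {Suc n} = F"
    by auto
  with F show "F \<in> {G \<in> xi_filters n. a \<in> G \<longrightarrow> b \<in> G}"
    using xi_filters_Suc_iff[OF assms, of F] by (metis (mono_tags, lifting) mem_Collect_eq)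
next
  fix F assume F: "F \<in> {G \<in> xi_filters n. a \<in> G \<longrightarrow> b \<in> G}"
  moreover have "F \<subseteq> {1..Suc n}" "Suc n \<notin> F" "F - {Suc n} = F"
    using F xi_filter_subset[of F n] by auto
  ultimately show "F \<in> {F \<in> xi_filters (Suc n). Suc n \<notin> F}"
    using xi_filters_Suc_iff[OF assms, of F] by (metis (mono_tags, lifting) mem_Collect_eq)
qed

definition rank_poly :: "nat \<Rightarrow> nat set set \<Rightarrow> 'a::comm_semiring_1 poly" where
  "rank_poly n S = (\<Sum>F\<in>S. monom 1 (n - card F))"

lemma rank_poly_insert_image:
  assumes "S \<subseteq> Pow {1..n}"
  shows "rank_poly (Suc n) (insert (Suc n) ` S) = rank_poly n S"
proof -
  have fresh: "Suc n \<notin> G" and fin: "finite G" if "G \<in> S" for G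
    using that assms by (fastforce, meson PowD finite_atLeastAtMost finite_subset subsetD)
  have "inj_on (insert (Suc n)) S"
    by (rule inj_onI) (metis fresh insert_ident)
  then have "rank_poly (Suc n) (insert (Suc n) ` S) =
               (\<Sum>G\<in>S. monom 1 (Suc n - card (insert (Suc n) G)))"
    unfolding rank_poly_def by (simp add: sum.reindex)
  also have "\<dots> = rank_poly n S"
    unfolding rank_poly_def by (rule sum.cong) (simp_all add: fresh fin)
  finally show ?thesis .
qed

lemma rank_poly_Suc:
  assumes "S \<subseteq> Pow {1..n}"
  shows "rank_poly (Suc n) S = monom 1 1 * rank_poly n S"
  unfolding rank_poly_def sum_distrib_left
proof (rule sum.cong)
  fix F assume "F \<in> S"
  then have "card F \<le> n"
    using assms card_mono[of "{1..n}" F] by auto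
  then show "monom 1 (Suc n - card F) = monom 1 1 * (monom 1 (n - card F) :: 'a poly)"
    by (simp add: mult_monom Suc_diff_le)
qed simp

definition R_split :: "nat \<Rightarrow> int poly \<times> int poly" where
  "R_split n = (rank_poly n {F \<in> xi_filters n. n \<in> F}, rank_poly n {F \<in> xi_filters n. n \<notin> F})"

lemma R_eq_R_split: "R n = case_prod (+) (R_split n)"
  unfolding R_def R_split_def rank_poly_def
  using sum.Int_Diff[OF finite_xi_filters, of _ n "{F. n \<in> F}"]
  by (simp add: Int_def set_diff_eq conj_commute)

text \<open>The transfer maps acting on the pair (filters containing the last element, filters
  avoiding it); the flag says whether the new element lies above the previous one.\<close>
fun fence_step :: "bool \<Rightarrow> 'a::comm_semiring_1 \<Rightarrow> 'a \<times> 'a \<Rightarrow> 'a \<times> 'a" where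
  "fence_step True X (p, q) = (p + q, X * q)"
| "fence_step False X (p, q) = (p, X * (p + q))"

lemma R_split_Suc:
  assumes n: "1 \<le> n"
  shows "R_split (Suc n) = fence_step (xi_rises_at n) (monom 1 1) (R_split n)"
proof -
  have Pow: "xi_filters n \<subseteq> Pow {1..n}" "{G \<in> xi_filters n. P G} \<subseteq> Pow {1..n}" for P
    using xi_filter_subset by blast+
  have fresh: "Suc n \<notin> G" if "G \<in> xi_filters n" for G
    using that xi_filter_subset[of G n] by auto
  show ?thesis
  proof (cases "xi_rises_at n")
    case True
    then have cover: "xi_new_cover n = (n, Suc n)"
      by (simp add: xi_new_cover_def)
    have "rank_poly (Suc n) {F \<in> xi_filters (Suc n). Suc n \<in> F} = (R n :: int poly)"
      using xi_filters_Suc_with_last[OF n cover] Pow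
      by (simp add: rank_poly_insert_image R_def rank_poly_def[symmetric])
    moreover have "{G \<in> xi_filters n. n \<in> G \<longrightarrow> Suc n \<in> G} = {G \<in> xi_filters n. n \<notin> G}"
      using fresh by blast
    then have "rank_poly (Suc n) {F \<in> xi_filters (Suc n). Suc n \<notin> F} =
                 monom 1 1 * (rank_poly n {G \<in> xi_filters n. n \<notin> G} :: int poly)"
      using xi_filters_Suc_without_last[OF n cover] Pow by (simp add: rank_poly_Suc)
    ultimately show ?thesis
      using True by (simp add: R_split_def R_eq_R_split)
  next
    case False
    then have cover: "xi_new_cover n = (Suc n, n)"
      by (simp add: xi_new_cover_def)
    have "rank_poly (Suc n) {F \<in> xi_filters (Suc n). Suc n \<in> F} =
            (rank_poly n {G \<in> xi_filters n. n \<in> G} :: int poly)"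
      using xi_filters_Suc_with_last[OF n cover] Pow by (simp add: rank_poly_insert_image)
    moreover have "{G \<in> xi_filters n. Suc n \<in> G \<longrightarrow> n \<in> G} = xi_filters n"
      using fresh by blast
    then have "rank_poly (Suc n) {F \<in> xi_filters (Suc n). Suc n \<notin> F} = monom 1 1 * (R n :: int poly)"
      using xi_filters_Suc_without_last[OF n cover] Pow
      by (simp add: rank_poly_Suc R_def rank_poly_def[symmetric])
    ultimately show ?thesis
      using False by (simp add: R_split_def R_eq_R_split)
  qed
qed

text \<open>Both products of the two transfer matrices have trace \<open>1 + X + X\<^sup>2\<close> and determinant
  \<open>X\<^sup>2\<close>; this is their Cayley--Hamilton identity, read off on the sum of the coordinates.\<close>
lemma fence_step_alternating_recurrence:
  fixes X :: "'a::comm_ring_1" and b :: bool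
  defines "M \<equiv> fence_step (\<not> b) X \<circ> fence_step b X"
  shows "case_prod (+) (M (M v)) = (1 + X + X * X) * case_prod (+) (M v) - X * X * case_prod (+) v"
  unfolding M_def by (cases b; cases v) (simp_all add: algebra_simps)

lemma R_recurrence:
  assumes "2 \<le> n"
  shows "R (n + 4) = [:1, 1, 1:] * R (n + 2) - monom 1 2 * R n"
proof -
  define X :: "int poly" where "X = monom 1 1"
  define M where "M = fence_step (\<not> xi_rises_at n) X \<circ> fence_step (xi_rises_at n) X"
  have alternates: "xi_rises_at (Suc k) \<longleftrightarrow> \<not> xi_rises_at k" if "2 \<le> k" for k
    using that unfolding xi_rises_at_def by presburger
  have two_steps: "R_split (k + 2) = M (R_split k)" if "2 \<le> k" "xi_rises_at k = xi_rises_at n" for k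
    using that by (simp add: M_def X_def R_split_Suc alternates)
  have "xi_rises_at (n + 2) = xi_rises_at n"
    unfolding xi_rises_at_def using assms by presburger
  then have "R (n + 4) = case_prod (+) (M (M (R_split n)))"
    using two_steps[of n] two_steps[of "n + 2"] assms
    by (simp add: R_eq_R_split numeral_Bit0 add.assoc)
  also have "\<dots> = (1 + X + X * X) * case_prod (+) (M (R_split n)) - X * X * case_prod (+) (R_split n)"
    unfolding M_def by (rule fence_step_alternating_recurrence)
  also have "\<dots> = [:1, 1, 1:] * R (n + 2) - monom 1 2 * R n"
  proof -
    have "[:1, 1, 1:] = 1 + X + X * X" "monom 1 2 = X * X"
      unfolding X_def by (simp add: monom_altdef one_pCons) (simp add: mult_monom numeral_2_eq_2)
    then show ?thesis
      using two_steps[of n] assms by (simp add: R_eq_R_split)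
  qed
  finally show ?thesis .
qed

theorem mainTheorem3:
  fixes m :: nat
  assumes "m \<ge> 3"
  shows "A m = [:1, 1, 1:] * A (m - 1) - monom 1 2 * A (m - 2) \<and>
         B m = [:1, 1, 1:] * B (m - 1) - monom 1 2 * B (m - 2)"
proof -
  define n where "n = 2 * (m - 2)"
  have "2 \<le> n" "2 * m = n + 4" "2 * (m - 1) = n + 2" "2 * (m - 2) = n"
    using assms by (simp_all add: n_def)
  then show ?thesis
    unfolding A_def B_def using R_recurrence[of n] R_recurrence[of "n + 1"]
    by (simp add: add.commute add.left_commute)
qed

end
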